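(* Let $\tau$ be a distributive triangle function on $\Delta^+$, $\Sigma$ a ring of subsets of $\Omega\ne\emptyset$, $\gamma$ a $\tau$-decomposable measure on $\Sigma$, and $f,g$ simple functions with $f\le g$. Then $\int_E f\,d\gamma\ge\int_E g\,d\gamma$ for every $E\in\Sigma$.
   Context: $\Delta^+$: functions $F:[-\infty,+\infty]\to[0,1]$ non-decreasing, left-continuous on $\mathbb{R}$, $F(x)=0$ for $x\le0$, $F(+\infty)=1$, ordered pointwise; $\varepsilon_0(x)=1$ if $x>0$, else $0$. Triangle function: symmetric, associative $\tau:\Delta^+\times\Delta^+\to\Delta^+$, non-decreasing in each variable, identity $\varepsilon_0$; $G\oplus H=\tau(G,H)$, $\bigoplus_{k=1}^nG_k=\tau(G_1,\bigoplus_{k=2}^nG_k)$. $c\odot G=\varepsilon_0$ if $c=0$, $(c\odot G)(x)=G(x/c)$ if $c>0$; $\tau$ distributive if $c\odot(G\oplus H)=(c\odot G)\oplus(c\odot H)$ for all $c\ge0$. $\tau$-decomposable measure: $\gamma:\Sigma\to\Delta^+$ with $\gamma_\emptyset=\varepsilon_0$, $\gamma_{A\cup B}=\tau(\gamma_A,\gamma_B)$ for disjoint $A,B\in\Sigma$. A simple function is $f=\sum_{i=1}^nx_i\chi_{E_i}$ with $x_i\in[0,\infty)$ and $E_i\in\Sigma$ pairwise disjoint, and $\int_Ef\,d\gamma=\bigoplus_{i=1}^nx_i\odot\gamma_{E\cap E_i}$ (independent of the representation). *)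

theory Defs
  imports "HOL-Analysis.Analysis"
begin

type_synonym dfun = "ereal \<Rightarrow> real"

definition DeltaPlus :: "dfun set" where
  "DeltaPlus = {F. (\<forall>x. 0 \<le> F x \<and> F x \<le> 1) \<and> mono F
     \<and> (\<forall>x::real. ((\<lambda>t. F (ereal t)) \<longlongrightarrow> F (ereal x)) (at_left x))
     \<and> (\<forall>x. x \<le> 0 \<longrightarrow> F x = 0) \<and> F PInfty = 1}"

definition eps0 :: dfun where
  "eps0 x = (if x > 0 then 1 else 0)"

definition triangle_function :: "(dfun \<Rightarrow> dfun \<Rightarrow> dfun) \<Rightarrow> bool" where
  "triangle_function \<tau> \<longleftrightarrow>
     (\<forall>G\<in>DeltaPlus. \<forall>H\<in>DeltaPlus. \<tau> G H \<in> DeltaPlus)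
   \<and> (\<forall>G\<in>DeltaPlus. \<forall>H\<in>DeltaPlus. \<tau> G H = \<tau> H G)
   \<and> (\<forall>G\<in>DeltaPlus. \<forall>H\<in>DeltaPlus. \<forall>K\<in>DeltaPlus. \<tau> G (\<tau> H K) = \<tau> (\<tau> G H) K)
   \<and> (\<forall>G\<in>DeltaPlus. \<forall>G'\<in>DeltaPlus. \<forall>H\<in>DeltaPlus. G \<le> G' \<longrightarrow> \<tau> G H \<le> \<tau> G' H)
   \<and> (\<forall>G\<in>DeltaPlus. \<tau> G eps0 = G)"

definition smult :: "real \<Rightarrow> dfun \<Rightarrow> dfun" where
  "smult c G = (if c = 0 then eps0 else (\<lambda>x. G (x / ereal c)))"

definition distributive_tf :: "(dfun \<Rightarrow> dfun \<Rightarrow> dfun) \<Rightarrow> bool" where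
  "distributive_tf \<tau> \<longleftrightarrow> (\<forall>c\<ge>0. \<forall>G\<in>DeltaPlus. \<forall>H\<in>DeltaPlus.
      smult c (\<tau> G H) = \<tau> (smult c G) (smult c H))"

definition tau_decomposable :: "(dfun \<Rightarrow> dfun \<Rightarrow> dfun) \<Rightarrow> 'a set set \<Rightarrow> ('a set \<Rightarrow> dfun) \<Rightarrow> bool" where
  "tau_decomposable \<tau> \<Sigma> \<gamma> \<longleftrightarrow> (\<forall>A\<in>\<Sigma>. \<gamma> A \<in> DeltaPlus) \<and> \<gamma> {} = eps0
     \<and> (\<forall>A\<in>\<Sigma>. \<forall>B\<in>\<Sigma>. A \<inter> B = {} \<longrightarrow> \<gamma> (A \<union> B) = \<tau> (\<gamma> A) (\<gamma> B))"

fun bigoplus :: "(dfun \<Rightarrow> dfun \<Rightarrow> dfun) \<Rightarrow> dfun list \<Rightarrow> dfun" where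
  "bigoplus \<tau> [] = eps0"
| "bigoplus \<tau> [G] = G"
| "bigoplus \<tau> (G # H # Gs) = \<tau> G (bigoplus \<tau> (H # Gs))"

definition simple_rep :: "'a set \<Rightarrow> 'a set set \<Rightarrow> ('a \<Rightarrow> real) \<Rightarrow> (real \<times> 'a set) list \<Rightarrow> bool" where
  "simple_rep \<Omega> \<Sigma> f rep \<longleftrightarrow>
     (\<forall>i<length rep. fst (rep ! i) \<ge> 0 \<and> snd (rep ! i) \<in> \<Sigma>)
   \<and> disjoint_family_on (\<lambda>i. snd (rep ! i)) {..<length rep}
   \<and> (\<forall>\<omega>\<in>\<Omega>. f \<omega> = (\<Sum>i<length rep. fst (rep ! i) * indicator (snd (rep ! i)) \<omega>))"

definition simple_fun :: "'a set \<Rightarrow> 'a set set \<Rightarrow> ('a \<Rightarrow> real) \<Rightarrow> bool" where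
  "simple_fun \<Omega> \<Sigma> f \<longleftrightarrow> (\<exists>rep. simple_rep \<Omega> \<Sigma> f rep)"

text \<open>The integral, computed from some representation (the paper asserts independence of it).\<close>
definition tau_integral ::
  "(dfun \<Rightarrow> dfun \<Rightarrow> dfun) \<Rightarrow> 'a set \<Rightarrow> 'a set set \<Rightarrow> ('a set \<Rightarrow> dfun) \<Rightarrow> 'a set \<Rightarrow> ('a \<Rightarrow> real) \<Rightarrow> dfun" where
  "tau_integral \<tau> \<Omega> \<Sigma> \<gamma> E f =
     (let rep = (SOME rep. simple_rep \<Omega> \<Sigma> f rep)
      in bigoplus \<tau> (map (\<lambda>(x, A). smult x (\<gamma> (E \<inter> A))) rep))"

end

theory Submission
  imports Defs
begin

text \<open>
  Write \<open>g\<close> as \<open>y\<chi>\<^sub>B + g'\<close> with \<open>g'\<close> vanishing on \<open>B\<close> and induct on the length of the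
  representation, for all \<open>E\<close> at once. By decomposability and distributivity the integral of
  \<open>f\<close> over \<open>E\<close> is the \<open>\<tau>\<close>-sum of its integrals over \<open>E \<inter> B\<close> and \<open>E - B\<close>. On \<open>E \<inter> B\<close> we
  have \<open>f \<le> y\<close>; since every element of \<open>\<Delta>\<^sup>+\<close> lies below the unit \<open>\<epsilon>\<^sub>0\<close>, \<open>\<gamma>\<close> is antitone and
  \<open>c \<odot> G\<close> is antitone in \<open>c\<close>, so the integral of \<open>f\<close> over \<open>E \<inter> B\<close> dominates \<open>y \<odot> \<gamma>(E \<inter> B)\<close>.
  On \<open>E - B\<close> the induction hypothesis compares \<open>f\<close> with \<open>g'\<close>, and monotonicity of \<open>\<tau>\<close>
  combines the two estimates.
\<close>

lemma eps0_in_DeltaPlus: "eps0 \<in> DeltaPlus"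
proof -
  have "((\<lambda>t. eps0 (ereal t)) \<longlongrightarrow> eps0 (ereal x)) (at_left x)" for x :: real
  proof (rule tendsto_eventually)
    show "\<forall>\<^sub>F t in at_left x. eps0 (ereal t) = eps0 (ereal x)"
    proof (cases "x > 0")
      case True
      then show ?thesis
        using eventually_at_left_real[OF True] by (auto simp: eps0_def elim!: eventually_mono)
    qed (auto simp: eps0_def eventually_at_filter)
  qed
  moreover have "mono eps0" by (auto simp: mono_def eps0_def)
  ultimately show ?thesis by (auto simp: DeltaPlus_def eps0_def)
qed

lemma DeltaPlus_le_eps0: "G \<in> DeltaPlus \<Longrightarrow> G \<le> eps0"
  by (auto simp: le_fun_def DeltaPlus_def eps0_def not_less)

lemma smult_zero [simp]: "smult 0 G = eps0"
  by (simp add: smult_def)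

lemma smult_eps0: "c \<ge> 0 \<Longrightarrow> smult c eps0 = eps0"
proof -
  assume "c \<ge> 0"
  moreover have "x / ereal c > 0 \<longleftrightarrow> x > 0" if "c > 0" for x
    using that by (cases x) (auto simp: field_simps)
  ultimately show ?thesis by (auto simp: smult_def eps0_def fun_eq_iff)
qed

lemma smult_in_DeltaPlus:
  assumes "c \<ge> 0" "G \<in> DeltaPlus"
  shows "smult c G \<in> DeltaPlus"
proof (cases "c = 0")
  case True
  then show ?thesis by (simp add: eps0_in_DeltaPlus)
next
  case False
  with assms have c: "c > 0" by simp
  have G: "\<forall>x. 0 \<le> G x \<and> G x \<le> 1" "mono G"
     "\<forall>x::real. ((\<lambda>t. G (ereal t)) \<longlongrightarrow> G (ereal x)) (at_left x)"
     "\<forall>x. x \<le> 0 \<longrightarrow> G x = 0" "G PInfty = 1"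
    using assms(2) by (auto simp: DeltaPlus_def)
  have "x / ereal c \<le> y / ereal c" if "x \<le> y" for x y
    using c that by (cases x; cases y) (auto simp: divide_right_mono)
  then have mono: "mono (\<lambda>x. G (x / ereal c))"
    using G(2) by (auto simp: mono_def)
  have left_cont: "((\<lambda>t. G (ereal t / ereal c)) \<longlongrightarrow> G (ereal x / ereal c)) (at_left x)"
    for x :: real
  proof -
    have "filterlim (\<lambda>t. t / c) (at_left (x / c)) (at_left x)"
    proof (rule tendsto_imp_filterlim_at_left)
      show "((\<lambda>t. t / c) \<longlongrightarrow> x / c) (at_left x)"
        using c by (auto intro!: tendsto_intros)
      show "\<forall>\<^sub>F t in at_left x. t / c < x / c"
        using c by (auto simp: eventually_at_filter divide_strict_right_mono)
    qed
    from filterlim_compose[OF G(3)[rule_format, of "x / c"] this] c show ?thesis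
      by simp
  qed
  have "x \<le> 0 \<Longrightarrow> x / ereal c \<le> 0" for x
    using c by (cases x) (auto simp: divide_nonpos_pos)
  with c G mono left_cont show ?thesis
    by (auto simp: DeltaPlus_def smult_def)
qed

lemma smult_mono: "G \<le> H \<Longrightarrow> smult c G \<le> smult c H"
  by (auto simp: smult_def le_fun_def)

lemma smult_antimono:
  assumes "0 \<le> c" "c \<le> d" "G \<in> DeltaPlus"
  shows "smult d G \<le> smult c G"
proof (cases "c = 0")
  case True
  then show ?thesis
    using assms by (simp add: DeltaPlus_le_eps0 smult_in_DeltaPlus)
next
  case False
  with assms have c: "c > 0" "d > 0" by auto
  have "G (x / ereal d) \<le> G (x / ereal c)" for x
  proof (cases "x > 0")
    case True
    then have "x / ereal d \<le> x / ereal c"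
      using c assms(2) by (cases x) (auto simp: frac_le)
    then show ?thesis using assms(3) by (auto simp: DeltaPlus_def mono_def)
  next
    case False
    then have "x / ereal d \<le> 0"
      using c by (cases x) (auto simp: divide_nonpos_pos)
    then show ?thesis using assms(3) by (auto simp: DeltaPlus_def)
  qed
  with c show ?thesis by (auto simp: smult_def le_fun_def)
qed


locale triangle_fun =
  fixes \<tau> :: "dfun \<Rightarrow> dfun \<Rightarrow> dfun"
  assumes triangle_function: "triangle_function \<tau>"
begin

lemma closed: "G \<in> DeltaPlus \<Longrightarrow> H \<in> DeltaPlus \<Longrightarrow> \<tau> G H \<in> DeltaPlus"
  using triangle_function unfolding triangle_function_def by blast

lemma commute: "G \<in> DeltaPlus \<Longrightarrow> H \<in> DeltaPlus \<Longrightarrow> \<tau> G H = \<tau> H G"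
  using triangle_function unfolding triangle_function_def by blast

lemma assoc:
  "G \<in> DeltaPlus \<Longrightarrow> H \<in> DeltaPlus \<Longrightarrow> K \<in> DeltaPlus \<Longrightarrow> \<tau> G (\<tau> H K) = \<tau> (\<tau> G H) K"
  using triangle_function unfolding triangle_function_def by blast

lemma unit: "G \<in> DeltaPlus \<Longrightarrow> \<tau> G eps0 = G"
  using triangle_function unfolding triangle_function_def by blast

lemma mono_left:
  "G \<in> DeltaPlus \<Longrightarrow> G' \<in> DeltaPlus \<Longrightarrow> H \<in> DeltaPlus \<Longrightarrow> G \<le> G' \<Longrightarrow> \<tau> G H \<le> \<tau> G' H"
  using triangle_function unfolding triangle_function_def by blast

lemma mono:
  assumes "G \<in> DeltaPlus" "G' \<in> DeltaPlus" "H \<in> DeltaPlus" "H' \<in> DeltaPlus"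
    and "G \<le> G'" "H \<le> H'"
  shows "\<tau> G H \<le> \<tau> G' H'"
proof -
  have "\<tau> G H \<le> \<tau> G' H" using assms by (intro mono_left)
  also have "\<dots> = \<tau> H G'" using assms by (intro commute)
  also have "\<dots> \<le> \<tau> H' G'" using assms by (intro mono_left)
  also have "\<dots> = \<tau> G' H'" using assms by (intro commute)
  finally show ?thesis .
qed

lemma bigoplus_eq_foldr: "set Gs \<subseteq> DeltaPlus \<Longrightarrow> bigoplus \<tau> Gs = foldr \<tau> Gs eps0"
  by (induction Gs rule: induct_list012) (auto simp: unit)

lemma foldr_in_DeltaPlus: "set Gs \<subseteq> DeltaPlus \<Longrightarrow> foldr \<tau> Gs eps0 \<in> DeltaPlus"
  by (induction Gs) (auto simp: eps0_in_DeltaPlus closed)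

lemma foldr_mono:
  assumes "\<And>i. i \<in> set xs \<Longrightarrow> a i \<in> DeltaPlus \<and> b i \<in> DeltaPlus \<and> a i \<le> b i"
  shows "foldr \<tau> (map a xs) eps0 \<le> foldr \<tau> (map b xs) eps0"
  using assms by (induction xs) (auto intro!: mono foldr_in_DeltaPlus)

lemma interchange:
  assumes "G \<in> DeltaPlus" "G' \<in> DeltaPlus" "H \<in> DeltaPlus" "H' \<in> DeltaPlus"
  shows "\<tau> (\<tau> G G') (\<tau> H H') = \<tau> (\<tau> G H) (\<tau> G' H')"
proof -
  have "\<tau> (\<tau> G G') (\<tau> H H') = \<tau> G (\<tau> (\<tau> G' H) H')"
    using assms by (simp add: assoc closed)
  also have "\<tau> G' H = \<tau> H G'"
    by (rule commute[OF assms(2,3)])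
  also have "\<tau> G (\<tau> (\<tau> H G') H') = \<tau> (\<tau> G H) (\<tau> G' H')"
    using assms by (simp add: assoc closed)
  finally show ?thesis .
qed

lemma foldr_distrib:
  assumes "\<And>i. i \<in> set xs \<Longrightarrow> a i \<in> DeltaPlus \<and> b i \<in> DeltaPlus"
  shows "foldr \<tau> (map (\<lambda>i. \<tau> (a i) (b i)) xs) eps0
       = \<tau> (foldr \<tau> (map a xs) eps0) (foldr \<tau> (map b xs) eps0)"
  using assms
proof (induction xs)
  case (Cons i xs)
  have "foldr \<tau> (map a xs) eps0 \<in> DeltaPlus" "foldr \<tau> (map b xs) eps0 \<in> DeltaPlus"
    using Cons.prems by (auto intro!: foldr_in_DeltaPlus)
  with Cons show ?case by (simp add: interchange)
qed (simp add: unit eps0_in_DeltaPlus)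

end


locale distributive_triangle_fun = triangle_fun +
  assumes distributive: "distributive_tf \<tau>"
begin

lemma smult_distrib:
  "c \<ge> 0 \<Longrightarrow> G \<in> DeltaPlus \<Longrightarrow> H \<in> DeltaPlus \<Longrightarrow> smult c (\<tau> G H) = \<tau> (smult c G) (smult c H)"
  using distributive by (auto simp: distributive_tf_def)

lemma smult_foldr:
  assumes "c \<ge> 0" "\<And>i. i \<in> set xs \<Longrightarrow> a i \<in> DeltaPlus"
  shows "smult c (foldr \<tau> (map a xs) eps0) = foldr \<tau> (map (\<lambda>i. smult c (a i)) xs) eps0"
  using assms
proof (induction xs)
  case (Cons i xs)
  have "foldr \<tau> (map a xs) eps0 \<in> DeltaPlus"
    using Cons.prems by (auto intro!: foldr_in_DeltaPlus)
  with Cons show ?case by (simp add: smult_distrib)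
qed (simp add: smult_eps0)

end


text \<open>A recursive form of \<open>simple_rep\<close>, suited to induction on the list.\<close>

fun disjoint_rep :: "'a set set \<Rightarrow> (real \<times> 'a set) list \<Rightarrow> bool" where
  "disjoint_rep \<Sigma> [] \<longleftrightarrow> True"
| "disjoint_rep \<Sigma> (p # r) \<longleftrightarrow>
     0 \<le> fst p \<and> snd p \<in> \<Sigma> \<and> (\<forall>q\<in>set r. snd p \<inter> snd q = {}) \<and> disjoint_rep \<Sigma> r"

definition rep_val :: "(real \<times> 'a set) list \<Rightarrow> 'a \<Rightarrow> real" where
  "rep_val r \<omega> = (\<Sum>p\<leftarrow>r. fst p * indicator (snd p) \<omega>)"

lemma rep_val_Nil [simp]: "rep_val [] \<omega> = 0"
  by (simp add: rep_val_def)

lemma rep_val_Cons [simp]: "rep_val (p # r) \<omega> = fst p * indicator (snd p) \<omega> + rep_val r \<omega>"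
  by (simp add: rep_val_def)

lemma disjoint_rep_memD: "disjoint_rep \<Sigma> r \<Longrightarrow> p \<in> set r \<Longrightarrow> 0 \<le> fst p \<and> snd p \<in> \<Sigma>"
  by (induction r) auto

lemma rep_val_outside: "(\<forall>p\<in>set r. \<omega> \<notin> snd p) \<Longrightarrow> rep_val r \<omega> = 0"
  by (induction r) auto

lemma rep_val_inside: "disjoint_rep \<Sigma> r \<Longrightarrow> p \<in> set r \<Longrightarrow> \<omega> \<in> snd p \<Longrightarrow> rep_val r \<omega> = fst p"
proof (induction r)
  case (Cons q r)
  show ?case
  proof (cases "p = q")
    case True
    with Cons.prems have "\<forall>p'\<in>set r. \<omega> \<notin> snd p'" by auto
    with True Cons.prems show ?thesis by (simp add: rep_val_outside)
  next
    case False
    with Cons.prems have "p \<in> set r" "\<omega> \<notin> snd q" by auto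
    with Cons show ?thesis by simp
  qed
qed simp

lemma simple_rep_imp_disjoint_rep:
  assumes "simple_rep \<Omega> \<Sigma> f r"
  shows "disjoint_rep \<Sigma> r" and "\<forall>\<omega>\<in>\<Omega>. f \<omega> = rep_val r \<omega>"
proof -
  have "disjoint_rep \<Sigma> r"
    if "\<forall>i<length r. fst (r ! i) \<ge> 0 \<and> snd (r ! i) \<in> \<Sigma>"
      and "disjoint_family_on (\<lambda>i. snd (r ! i)) {..<length r}" for r
    using that
  proof (induction r)
    case (Cons p r)
    have "\<forall>i<length r. fst (r ! i) \<ge> 0 \<and> snd (r ! i) \<in> \<Sigma>"
      using Cons.prems(1) by auto
    moreover have "disjoint_family_on (\<lambda>i. snd (r ! i)) {..<length r}"
      using Cons.prems(2) unfolding disjoint_family_on_def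
      by (metis Suc_less_eq lessThan_iff length_Cons nth_Cons_Suc old.nat.inject)
    moreover have "snd p \<inter> snd q = {}" if "q \<in> set r" for q
    proof -
      obtain j where "j < length r" "q = r ! j"
        using \<open>q \<in> set r\<close> by (metis in_set_conv_nth)
      with Cons.prems(2) show ?thesis
        unfolding disjoint_family_on_def by (metis Zero_not_Suc length_Cons lessThan_iff
            not_less_eq nth_Cons_0 nth_Cons_Suc zero_less_Suc)
    qed
    moreover have "0 \<le> fst p \<and> snd p \<in> \<Sigma>"
      using Cons.prems(1) by fastforce
    ultimately show ?case using Cons.IH by simp
  qed simp
  with assms show "disjoint_rep \<Sigma> r"
    unfolding simple_rep_def by blast
  have "(\<Sum>i<length r. fst (r ! i) * indicator (snd (r ! i)) \<omega>) = rep_val r \<omega>" for \<omega>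
    unfolding rep_val_def sum_list_sum_nth by (simp add: atLeast0LessThan)
  with assms show "\<forall>\<omega>\<in>\<Omega>. f \<omega> = rep_val r \<omega>"
    unfolding simple_rep_def by simp
qed

definition rep_integral ::
  "(dfun \<Rightarrow> dfun \<Rightarrow> dfun) \<Rightarrow> ('a set \<Rightarrow> dfun) \<Rightarrow> 'a set \<Rightarrow> (real \<times> 'a set) list \<Rightarrow> dfun" where
  "rep_integral \<tau> \<gamma> E r = foldr \<tau> (map (\<lambda>p. smult (fst p) (\<gamma> (E \<inter> snd p))) r) eps0"

lemma rep_integral_Cons:
  "rep_integral \<tau> \<gamma> E (p # r) = \<tau> (smult (fst p) (\<gamma> (E \<inter> snd p))) (rep_integral \<tau> \<gamma> E r)"
  by (simp add: rep_integral_def)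

lemma rep_integral_cong:
  "(\<And>p. p \<in> set r \<Longrightarrow> E \<inter> snd p = E' \<inter> snd p) \<Longrightarrow> rep_integral \<tau> \<gamma> E r = rep_integral \<tau> \<gamma> E' r"
  unfolding rep_integral_def
  by (rule arg_cong[where f = "\<lambda>l. foldr \<tau> l eps0"], rule map_cong) simp_all


locale tau_measure = distributive_triangle_fun \<tau> + ring_of_sets \<Omega> \<Sigma>
  for \<tau> and \<Omega> :: "'a set" and \<Sigma> +
  fixes \<gamma> :: "'a set \<Rightarrow> dfun"
  assumes decomposable: "tau_decomposable \<tau> \<Sigma> \<gamma>"
begin

lemma measure_in_DeltaPlus: "A \<in> \<Sigma> \<Longrightarrow> \<gamma> A \<in> DeltaPlus"
  using decomposable by (auto simp: tau_decomposable_def)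

lemma measure_empty: "\<gamma> {} = eps0"
  using decomposable by (auto simp: tau_decomposable_def)

lemma measure_Un: "A \<in> \<Sigma> \<Longrightarrow> B \<in> \<Sigma> \<Longrightarrow> A \<inter> B = {} \<Longrightarrow> \<gamma> (A \<union> B) = \<tau> (\<gamma> A) (\<gamma> B)"
  using decomposable by (auto simp: tau_decomposable_def)

lemma measure_split:
  assumes "C \<in> \<Sigma>" "B \<in> \<Sigma>"
  shows "\<gamma> C = \<tau> (\<gamma> (C \<inter> B)) (\<gamma> (C - B))"
proof -
  have "\<gamma> C = \<gamma> ((C \<inter> B) \<union> (C - B))"
    by (simp add: Int_Diff_Un)
  also have "\<dots> = \<tau> (\<gamma> (C \<inter> B)) (\<gamma> (C - B))"
    using assms by (intro measure_Un Int Diff) auto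
  finally show ?thesis .
qed

lemma measure_antimono:
  assumes "A \<subseteq> C" "A \<in> \<Sigma>" "C \<in> \<Sigma>"
  shows "\<gamma> C \<le> \<gamma> A"
proof -
  have "\<gamma> C = \<tau> (\<gamma> A) (\<gamma> (C - A))"
    using measure_split[OF assms(3,2)] assms(1) by (simp add: Int_absorb1)
  also have "\<dots> \<le> \<tau> (\<gamma> A) eps0"
    using assms by (intro mono measure_in_DeltaPlus Diff eps0_in_DeltaPlus order_refl
        DeltaPlus_le_eps0)
  also have "\<dots> = \<gamma> A"
    using assms by (simp add: unit measure_in_DeltaPlus)
  finally show ?thesis .
qed

lemma rep_Union_in_sets: "disjoint_rep \<Sigma> r \<Longrightarrow> \<Union>(snd ` set r) \<in> \<Sigma>"
  by (induction r) auto

lemma foldr_measure_rep: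
  "disjoint_rep \<Sigma> r \<Longrightarrow> C \<in> \<Sigma> \<Longrightarrow>
     foldr \<tau> (map (\<lambda>p. \<gamma> (C \<inter> snd p)) r) eps0 = \<gamma> (C \<inter> \<Union>(snd ` set r))"
proof (induction r)
  case Nil
  then show ?case by (simp add: measure_empty)
next
  case (Cons p r)
  have "C \<inter> \<Union>(snd ` set (p # r)) = (C \<inter> snd p) \<union> (C \<inter> \<Union>(snd ` set r))"
    by auto
  moreover have "(C \<inter> snd p) \<inter> (C \<inter> \<Union>(snd ` set r)) = {}"
    using Cons.prems by auto
  ultimately show ?case
    using Cons by (simp add: measure_Un Int rep_Union_in_sets)
qed

lemma rep_integral_in_DeltaPlus:
  "disjoint_rep \<Sigma> r \<Longrightarrow> E \<in> \<Sigma> \<Longrightarrow> rep_integral \<tau> \<gamma> E r \<in> DeltaPlus"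
  unfolding rep_integral_def
  by (auto intro!: foldr_in_DeltaPlus smult_in_DeltaPlus measure_in_DeltaPlus Int
      dest: disjoint_rep_memD)

lemma rep_integral_split:
  assumes "disjoint_rep \<Sigma> r" "E \<in> \<Sigma>" "B \<in> \<Sigma>"
  shows "rep_integral \<tau> \<gamma> E r = \<tau> (rep_integral \<tau> \<gamma> (E \<inter> B) r) (rep_integral \<tau> \<gamma> (E - B) r)"
proof -
  have "smult (fst p) (\<gamma> (E \<inter> snd p))
      = \<tau> (smult (fst p) (\<gamma> (E \<inter> B \<inter> snd p))) (smult (fst p) (\<gamma> ((E - B) \<inter> snd p)))"
    if "p \<in> set r" for p
  proof -
    have p: "0 \<le> fst p" "snd p \<in> \<Sigma>"
      using disjoint_rep_memD[OF assms(1) that] by auto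
    have "E \<inter> snd p \<inter> B = E \<inter> B \<inter> snd p" "E \<inter> snd p - B = (E - B) \<inter> snd p"
      by auto
    with measure_split[of "E \<inter> snd p" B] p assms(2,3)
    show ?thesis by (simp add: smult_distrib measure_in_DeltaPlus Int Diff)
  qed
  then show ?thesis
    unfolding rep_integral_def using assms
    by (simp cong: map_cong, subst foldr_distrib)
      (auto intro!: smult_in_DeltaPlus measure_in_DeltaPlus Int Diff dest: disjoint_rep_memD)
qed

lemma rep_integral_ge_smult:
  assumes r: "disjoint_rep \<Sigma> r" and C: "C \<in> \<Sigma>" and "0 \<le> y"
    and le: "\<forall>\<omega>\<in>C. rep_val r \<omega> \<le> y"
  shows "smult y (\<gamma> C) \<le> rep_integral \<tau> \<gamma> C r"
proof -
  have C_r: "C \<inter> snd p \<in> \<Sigma>" if "p \<in> set r" for p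
    using disjoint_rep_memD[OF r that] C by (simp add: Int)
  have "smult y (\<gamma> C) \<le> smult y (\<gamma> (C \<inter> \<Union>(snd ` set r)))"
    using r C by (intro smult_mono measure_antimono Int rep_Union_in_sets) auto
  also have "\<gamma> (C \<inter> \<Union>(snd ` set r)) = foldr \<tau> (map (\<lambda>p. \<gamma> (C \<inter> snd p)) r) eps0"
    using foldr_measure_rep[OF r C] by simp
  also have "smult y \<dots> = foldr \<tau> (map (\<lambda>p. smult y (\<gamma> (C \<inter> snd p))) r) eps0"
    using \<open>0 \<le> y\<close> C_r by (intro smult_foldr measure_in_DeltaPlus)
  also have "\<dots> \<le> rep_integral \<tau> \<gamma> C r"
    unfolding rep_integral_def
  proof (rule foldr_mono)
    fix p assume p: "p \<in> set r"
    have "smult y (\<gamma> (C \<inter> snd p)) \<le> smult (fst p) (\<gamma> (C \<inter> snd p))"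
    proof (cases "C \<inter> snd p = {}")
      case True
      then show ?thesis
        using \<open>0 \<le> y\<close> disjoint_rep_memD[OF r p] by (simp add: measure_empty smult_eps0)
    next
      case False
      then obtain \<omega> where "\<omega> \<in> C" "\<omega> \<in> snd p" by blast
      then have "fst p \<le> y"
        using le rep_val_inside[OF r p] by metis
      then show ?thesis
        using disjoint_rep_memD[OF r p] C_r[OF p]
        by (intro smult_antimono measure_in_DeltaPlus) auto
    qed
    then show "smult y (\<gamma> (C \<inter> snd p)) \<in> DeltaPlus \<and>
        smult (fst p) (\<gamma> (C \<inter> snd p)) \<in> DeltaPlus \<and>
        smult y (\<gamma> (C \<inter> snd p)) \<le> smult (fst p) (\<gamma> (C \<inter> snd p))"
      using \<open>0 \<le> y\<close> disjoint_rep_memD[OF r p] C_r[OF p]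
      by (auto intro!: smult_in_DeltaPlus measure_in_DeltaPlus)
  qed
  finally show ?thesis .
qed

lemma rep_integral_antimono:
  assumes "disjoint_rep \<Sigma> rg" "disjoint_rep \<Sigma> rf" "E \<in> \<Sigma>"
    and "\<forall>\<omega>\<in>E. rep_val rf \<omega> \<le> rep_val rg \<omega>"
  shows "rep_integral \<tau> \<gamma> E rg \<le> rep_integral \<tau> \<gamma> E rf"
  using assms
proof (induction rg arbitrary: E)
  case Nil
  then show ?case
    using rep_integral_ge_smult[of rf E 0] by (simp add: rep_integral_def)
next
  case (Cons q rest)
  obtain y B where q: "q = (y, B)" by (cases q)
  with Cons.prems(1) have y: "0 \<le> y" and B: "B \<in> \<Sigma>"
    and disj: "\<forall>p\<in>set rest. B \<inter> snd p = {}" and rest: "disjoint_rep \<Sigma> rest"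
    by auto
  have rest_on_B: "rep_val rest \<omega> = 0" if "\<omega> \<in> B" for \<omega>
    using disj that by (intro rep_val_outside) auto
  have bound: "smult y (\<gamma> (E \<inter> B)) \<le> rep_integral \<tau> \<gamma> (E \<inter> B) rf"
    using Cons.prems q y B rest_on_B by (intro rep_integral_ge_smult) (auto simp: Int)
  have "rep_integral \<tau> \<gamma> E rest = rep_integral \<tau> \<gamma> (E - B) rest"
    using disj by (intro rep_integral_cong) blast
  also have "\<dots> \<le> rep_integral \<tau> \<gamma> (E - B) rf"
    using Cons.prems q B rest rest_on_B by (intro Cons.IH) (auto simp: Diff)
  finally have IH: "rep_integral \<tau> \<gamma> E rest \<le> rep_integral \<tau> \<gamma> (E - B) rf" .
  have "rep_integral \<tau> \<gamma> E (q # rest) = \<tau> (smult y (\<gamma> (E \<inter> B))) (rep_integral \<tau> \<gamma> E rest)"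
    by (simp add: rep_integral_Cons q)
  also have "\<dots> \<le> \<tau> (rep_integral \<tau> \<gamma> (E \<inter> B) rf) (rep_integral \<tau> \<gamma> (E - B) rf)"
    using Cons.prems y B rest bound IH
    by (intro mono smult_in_DeltaPlus measure_in_DeltaPlus rep_integral_in_DeltaPlus Int Diff)
  also have "\<dots> = rep_integral \<tau> \<gamma> E rf"
    using Cons.prems(2,3) B by (rule rep_integral_split[symmetric])
  finally show ?case .
qed

lemma tau_integral_eq_rep_integral:
  assumes "simple_fun \<Omega> \<Sigma> f" "E \<in> \<Sigma>"
  obtains r where "disjoint_rep \<Sigma> r" "\<forall>\<omega>\<in>\<Omega>. f \<omega> = rep_val r \<omega>"
    and "tau_integral \<tau> \<Omega> \<Sigma> \<gamma> E f = rep_integral \<tau> \<gamma> E r"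
proof
  define r where "r = (SOME r. simple_rep \<Omega> \<Sigma> f r)"
  have "simple_rep \<Omega> \<Sigma> f r"
    using assms(1) unfolding simple_fun_def r_def by (rule someI_ex)
  note rep = simple_rep_imp_disjoint_rep[OF this]
  then show "disjoint_rep \<Sigma> r" "\<forall>\<omega>\<in>\<Omega>. f \<omega> = rep_val r \<omega>" by blast+
  have "set (map (\<lambda>p. smult (fst p) (\<gamma> (E \<inter> snd p))) r) \<subseteq> DeltaPlus"
    using rep(1) assms(2)
    by (auto intro!: smult_in_DeltaPlus measure_in_DeltaPlus Int dest: disjoint_rep_memD)
  then show "tau_integral \<tau> \<Omega> \<Sigma> \<gamma> E f = rep_integral \<tau> \<gamma> E r"
    unfolding tau_integral_def Let_def r_def[symmetric] rep_integral_def
    by (simp add: split_def bigoplus_eq_foldr)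
qed

end


theorem theorem4p4:
  fixes \<tau> :: "dfun \<Rightarrow> dfun \<Rightarrow> dfun" and \<Omega> :: "'a set" and \<Sigma> :: "'a set set"
    and \<gamma> :: "'a set \<Rightarrow> dfun" and f g :: "'a \<Rightarrow> real"
  assumes "triangle_function \<tau>" and "distributive_tf \<tau>"
    and "ring_of_sets \<Omega> \<Sigma>" and "\<Omega> \<noteq> {}"
    and "tau_decomposable \<tau> \<Sigma> \<gamma>"
    and "simple_fun \<Omega> \<Sigma> f" and "simple_fun \<Omega> \<Sigma> g"
    and "\<forall>\<omega>\<in>\<Omega>. f \<omega> \<le> g \<omega>"
    and "E \<in> \<Sigma>"
  shows "tau_integral \<tau> \<Omega> \<Sigma> \<gamma> E g \<le> tau_integral \<tau> \<Omega> \<Sigma> \<gamma> E f"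
proof -
  interpret tau_measure \<tau> \<Omega> \<Sigma> \<gamma>
    unfolding tau_measure_def tau_measure_axioms_def distributive_triangle_fun_def
      distributive_triangle_fun_axioms_def triangle_fun_def
    using assms(1,2,3,5) by blast
  obtain rf where rf: "disjoint_rep \<Sigma> rf" "\<forall>\<omega>\<in>\<Omega>. f \<omega> = rep_val rf \<omega>"
    and int_f: "tau_integral \<tau> \<Omega> \<Sigma> \<gamma> E f = rep_integral \<tau> \<gamma> E rf"
    using tau_integral_eq_rep_integral[OF assms(6,9)] .
  obtain rg where rg: "disjoint_rep \<Sigma> rg" "\<forall>\<omega>\<in>\<Omega>. g \<omega> = rep_val rg \<omega>"
    and int_g: "tau_integral \<tau> \<Omega> \<Sigma> \<gamma> E g = rep_integral \<tau> \<gamma> E rg"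
    using tau_integral_eq_rep_integral[OF assms(7,9)] .
  have "\<forall>\<omega>\<in>E. rep_val rf \<omega> \<le> rep_val rg \<omega>"
    using assms(8,9) rf(2) rg(2) sets_into_space by fastforce
  with rf(1) rg(1) assms(9) show ?thesis
    unfolding int_f int_g by (intro rep_integral_antimono)
qed

end
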